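(* Let $\mathbf{R}\in SO(3)$, $\theta\in(\theta^-,\theta^+)$ and $\mathbf{A}\in\mathbb{R}^{3\times2}$. Define $\mathbf{L}_1:=\mathbf{R}[\mathbf{v}(\theta)\otimes\tilde{\mathbf{e}}_1+\mathbf{u}(\theta)\otimes\tilde{\mathbf{e}}_2]$ and $\mathbf{L}_2:=\mathbf{R}[(\mathbf{v}(\theta)\cdot\mathbf{v}'(\theta))\mathbf{u}(\theta)\otimes\tilde{\mathbf{e}}_1-(\mathbf{u}(\theta)\cdot\mathbf{u}'(\theta))\mathbf{v}(\theta)\otimes\tilde{\mathbf{e}}_2]$. Then $\mathbf{L}_1:\mathbf{A}=0$ and $\mathbf{L}_2:\mathbf{A}=0$ if and only if there exist $\boldsymbol{\omega}\in\mathbb{R}^3$ and $\xi\in\mathbb{R}$ with $\mathbf{A}\tilde{\mathbf{e}}_1=\mathbf{R}[\boldsymbol{\omega}\times\mathbf{u}(\theta)+\xi\mathbf{u}'(\theta)]$ and $\mathbf{A}\tilde{\mathbf{e}}_2=\mathbf{R}[\boldsymbol{\omega}\times\mathbf{v}(\theta)+\xi\mathbf{v}'(\theta)]$. (Applied pointwise, this holds for fields $\mathbf{A}(\mathbf{x})$ with $\mathbf{R}=\mathbf{R}_{\mathrm{eff}}(\mathbf{x})$, $\theta=\theta(\mathbf{x})$.)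
   Context: $\mathbf{u},\mathbf{v}:(\theta^-,\theta^+)\to\mathbb{R}^3$ are the deformed lattice vectors $\mathbf{u}(\theta)=\mathbf{t}_1(\theta)-\mathbf{t}_3(\theta)$, $\mathbf{v}(\theta)=\mathbf{t}_2(\theta)-\mathbf{t}_4(\theta)$ of the analytic mechanism parameterization of a parallelogram origami cell (rigid folding preserving crease lengths, adjacent-crease angles and mountain-valley assignment); they are orthogonal to $\mathbf{e}_3$ with $\mathbf{e}_3\cdot(\mathbf{u}\times\mathbf{v})>0$, and $\mathbf{u}'(\theta)\cdot\mathbf{u}(\theta)\neq0$, $\mathbf{v}'(\theta)\cdot\mathbf{v}(\theta)\neq0$ on $(\theta^-,\theta^+)$; primes are $d/d\theta$. $\{\tilde{\mathbf{e}}_1,\tilde{\mathbf{e}}_2\}$ is the standard basis of $\mathbb{R}^2$; $\mathbf{A}:\mathbf{B}:=\mathrm{Tr}(\mathbf{A}^T\mathbf{B})$. *)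

theory Defs
  imports "HOL-Analysis.Analysis" "HOL-Analysis.Cross3"
begin

definition outer :: "real^'m \<Rightarrow> real^'n \<Rightarrow> real^'n^'m" where
  "outer a b = (\<chi> i j. a $ i * b $ j)"

definition frob :: "real^'n^'m \<Rightarrow> real^'n^'m \<Rightarrow> real" where
  "frob A B = trace (transpose A ** B)"

definition crease_angle :: "real^3 \<Rightarrow> real^3 \<Rightarrow> real" where
  "crease_angle a b = arccos ((a \<bullet> b) / (norm a * norm b))"

text \<open>Rigid folding mechanism of the four crease vectors t1..t4 of a parallelogram
  origami cell on the open interval (theta_m, theta_p): each crease is a differentiable,
  nonzero vector function, crease lengths are constant, and the angles between
  adjacent creases (t1,t2),(t2,t3),(t3,t4),(t4,t1) are constant.\<close>
definition rigid_crease_mechanism ::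
  "real \<Rightarrow> real \<Rightarrow> (real \<Rightarrow> real^3) \<Rightarrow> (real \<Rightarrow> real^3) \<Rightarrow> (real \<Rightarrow> real^3) \<Rightarrow> (real \<Rightarrow> real^3) \<Rightarrow> bool"
where
  "rigid_crease_mechanism theta_m theta_p t1 t2 t3 t4 \<longleftrightarrow>
     theta_m < theta_p \<and>
     (\<forall>th\<in>{theta_m<..<theta_p}. \<forall>t\<in>{t1,t2,t3,t4}. t differentiable (at th) \<and> t th \<noteq> 0) \<and>
     (\<forall>a\<in>{theta_m<..<theta_p}. \<forall>b\<in>{theta_m<..<theta_p}.
        (\<forall>t\<in>{t1,t2,t3,t4}. norm (t a) = norm (t b)) \<and>
        (\<forall>(s,t)\<in>{(t1,t2),(t2,t3),(t3,t4),(t4,t1)}.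
            crease_angle (s a) (t a) = crease_angle (s b) (t b)))"

end

theory Submission
  imports Defs
begin

text \<open>Writing \<open>a\<^sub>i = R\<^sup>T A e\<^sub>i\<close>, the conditions \<open>L\<^sub>1 : A = 0\<close> and \<open>L\<^sub>2 : A = 0\<close> become the two
  scalar constraints \<open>v\<cdot>a\<^sub>1 + u\<cdot>a\<^sub>2 = 0\<close> and \<open>(v\<cdot>v') (u\<cdot>a\<^sub>1) = (u\<cdot>u') (v\<cdot>a\<^sub>2)\<close>.
  Pairs \<open>(\<omega>\<times>u + \<xi>u', \<omega>\<times>v + \<xi>v')\<close> satisfy them because \<open>v\<cdot>(\<omega>\<times>u) + u\<cdot>(\<omega>\<times>v) = 0\<close> and
  because \<open>u\<cdot>v\<close> is constant along the mechanism: \<open>(t\<^sub>1 - t\<^sub>3)\<cdot>(t\<^sub>2 - t\<^sub>4)\<close> expands into inner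
  products of adjacent creases only, which are fixed by the crease lengths and angles, so
  \<open>u\<cdot>v' + u'\<cdot>v = 0\<close>. Conversely, \<open>\<xi>\<close> is read off from \<open>u\<cdot>a\<^sub>1 = \<xi> (u\<cdot>u')\<close>, and the remainders
  \<open>a\<^sub>1 - \<xi>u'\<close>, \<open>a\<^sub>2 - \<xi>v'\<close> satisfy the three linear conditions characterising infinitesimal
  rotations of the independent pair \<open>(u, v)\<close>, which give \<open>\<omega>\<close> by an explicit solution.\<close>

lemma frob_eq_sum: "frob M B = (\<Sum>i\<in>UNIV. \<Sum>k\<in>UNIV. M$k$i * B$k$i)"
  by (simp add: frob_def trace_def matrix_matrix_mult_def transpose_def)

lemma frob_outer: "frob (outer a b) B = a \<bullet> (B *v b)"
proof -
  have "frob (outer a b) B = (\<Sum>i\<in>UNIV. \<Sum>k\<in>UNIV. a$k * (B$k$i * b$i))"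
    by (simp add: frob_eq_sum outer_def mult_ac)
  also have "\<dots> = (\<Sum>k\<in>UNIV. a$k * (\<Sum>i\<in>UNIV. B$k$i * b$i))"
    by (subst sum.swap) (simp add: sum_distrib_left)
  finally show ?thesis
    by (simp add: inner_vec_def matrix_vector_mult_def)
qed

lemma frob_add_left: "frob (M + N) B = frob M B + frob N B"
  by (simp add: frob_eq_sum algebra_simps sum.distrib)

lemma frob_diff_left: "frob (M - N) B = frob M B - frob N B"
  by (simp add: frob_eq_sum algebra_simps sum_subtractf)

lemma frob_scaleR_left: "frob (c *\<^sub>R M) B = c * frob M B"
  by (simp add: frob_eq_sum algebra_simps sum_distrib_left)

lemma frob_matrix_mult_left: "frob (R ** M) A = frob M (transpose R ** A)"
  by (simp add: frob_def matrix_transpose_mul matrix_mul_assoc)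

lemma orthogonal_matrix_eq_mult_iff:
  fixes R :: "real^'n^'n"
  assumes "orthogonal_matrix R"
  shows "y = R *v z \<longleftrightarrow> transpose R *v y = z"
  using assms unfolding orthogonal_matrix_def
  by (metis matrix_vector_mul_assoc matrix_vector_mul_lid)

lemma inner_vector_derivative_eq_0_if_const_on:
  fixes f g :: "real \<Rightarrow> 'a::real_inner"
  assumes "open S" "x \<in> S" "f differentiable (at x)" "g differentiable (at x)"
    and const: "\<forall>s\<in>S. f s \<bullet> g s = f x \<bullet> g x"
  shows "f x \<bullet> vector_derivative g (at x) + vector_derivative f (at x) \<bullet> g x = 0"
proof -
  let ?f' = "vector_derivative f (at x)" and ?g' = "vector_derivative g (at x)"
  have "((\<lambda>s. f s \<bullet> g s) has_derivative (\<lambda>h. f x \<bullet> (h *\<^sub>R ?g') + (h *\<^sub>R ?f') \<bullet> g x)) (at x)"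
    using assms(3,4) unfolding vector_derivative_works has_vector_derivative_def
    by (rule has_derivative_inner)
  then have "((\<lambda>s. f s \<bullet> g s) has_real_derivative f x \<bullet> ?g' + ?f' \<bullet> g x) (at x)"
    by (simp add: has_real_derivative_iff_has_vector_derivative has_vector_derivative_def algebra_simps)
  moreover obtain e where "e > 0" "ball x e \<subseteq> S"
    using assms(1,2) open_contains_ball by blast
  ultimately show ?thesis
    using const by (intro DERIV_local_const[where d = e]) (auto simp: dist_real_def)
qed

lemma cross3_solve_planar:
  fixes u v b1 b2 :: "real^3"
  assumes u3: "u$3 = 0" and v3: "v$3 = 0" and indep: "u$1 * v$2 - u$2 * v$1 \<noteq> 0"
    and "u \<bullet> b1 = 0" and "v \<bullet> b2 = 0" and "v \<bullet> b1 + u \<bullet> b2 = 0"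
  shows "\<exists>w. cross3 w u = b1 \<and> cross3 w v = b2"
proof -
  define D where "D = u$1 * v$2 - u$2 * v$1"
  have e: "u$1 * b1$1 + u$2 * b1$2 = 0" "v$1 * b2$1 + v$2 * b2$2 = 0"
    "v$1 * b1$1 + v$2 * b1$2 + u$1 * b2$1 + u$2 * b2$2 = 0"
    using assms by (simp_all add: inner_vec_def sum_3)
  \<comment> \<open>\<open>w\<^sub>3\<close> is forced by the first two components of \<open>w \<times> u = b\<^sub>1\<close>, and \<open>(w\<^sub>1, w\<^sub>2)\<close> solves the
    2\<times>2 system given by the third components of both equations.\<close>
  let ?w = "vector [(u$1 * b2$3 - v$1 * b1$3) / D, (u$2 * b2$3 - v$2 * b1$3) / D,
    (b1$1 * v$1 + b1$2 * v$2) / D] :: real^3"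
  have "cross3 ?w u = b1 \<and> cross3 ?w v = b2"
    using indep e u3 v3 D_def unfolding vec_eq_iff forall_3 cross3_def
    by (simp add: field_simps flip: D_def) algebra
  then show ?thesis by blast
qed

lemma cross3_decomposition_iff:
  fixes u v u' v' a1 a2 :: "real^3"
  assumes u3: "u$3 = 0" and v3: "v$3 = 0" and indep: "u$1 * v$2 - u$2 * v$1 \<noteq> 0"
    and uu': "u \<bullet> u' \<noteq> 0" and vv': "v \<bullet> v' \<noteq> 0" and uv': "u \<bullet> v' + u' \<bullet> v = 0"
  shows "(v \<bullet> a1 + u \<bullet> a2 = 0 \<and> (v \<bullet> v') * (u \<bullet> a1) - (u \<bullet> u') * (v \<bullet> a2) = 0) \<longleftrightarrow>
    (\<exists>\<omega> \<xi>. a1 = cross3 \<omega> u + \<xi> *\<^sub>R u' \<and> a2 = cross3 \<omega> v + \<xi> *\<^sub>R v')"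
proof
  assume h: "v \<bullet> a1 + u \<bullet> a2 = 0 \<and> (v \<bullet> v') * (u \<bullet> a1) - (u \<bullet> u') * (v \<bullet> a2) = 0"
  define \<xi> where "\<xi> = (u \<bullet> a1) / (u \<bullet> u')"
  have \<xi>1: "u \<bullet> a1 = \<xi> * (u \<bullet> u')"
    using uu' by (simp add: \<xi>_def)
  have \<xi>2: "v \<bullet> a2 = \<xi> * (v \<bullet> v')"
    using h uu' by (simp add: \<xi>1) (metis mult.commute mult.left_commute mult_left_cancel)
  have "u \<bullet> (a1 - \<xi> *\<^sub>R u') = 0" "v \<bullet> (a2 - \<xi> *\<^sub>R v') = 0"
    using \<xi>1 \<xi>2 by (simp_all add: inner_diff_right)
  moreover have "v \<bullet> (a1 - \<xi> *\<^sub>R u') + u \<bullet> (a2 - \<xi> *\<^sub>R v') = 0"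
  proof -
    have "v \<bullet> (a1 - \<xi> *\<^sub>R u') + u \<bullet> (a2 - \<xi> *\<^sub>R v')
        = (v \<bullet> a1 + u \<bullet> a2) - \<xi> * (u \<bullet> v' + u' \<bullet> v)"
      by (simp add: inner_diff_right inner_commute algebra_simps)
    then show ?thesis
      using h uv' by simp
  qed
  ultimately obtain \<omega> where "cross3 \<omega> u = a1 - \<xi> *\<^sub>R u'" "cross3 \<omega> v = a2 - \<xi> *\<^sub>R v'"
    using cross3_solve_planar[OF u3 v3 indep] by blast
  then show "\<exists>\<omega> \<xi>. a1 = cross3 \<omega> u + \<xi> *\<^sub>R u' \<and> a2 = cross3 \<omega> v + \<xi> *\<^sub>R v'"
    by (metis diff_add_cancel)
next
  assume "\<exists>\<omega> \<xi>. a1 = cross3 \<omega> u + \<xi> *\<^sub>R u' \<and> a2 = cross3 \<omega> v + \<xi> *\<^sub>R v'"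
  then obtain \<omega> \<xi> where a: "a1 = cross3 \<omega> u + \<xi> *\<^sub>R u'" "a2 = cross3 \<omega> v + \<xi> *\<^sub>R v'"
    by blast
  have "v \<bullet> cross3 \<omega> u + u \<bullet> cross3 \<omega> v = 0"
    by (simp add: cross3_def inner_vec_def sum_3 vector_def algebra_simps)
  moreover have "v \<bullet> a1 + u \<bullet> a2 = (v \<bullet> cross3 \<omega> u + u \<bullet> cross3 \<omega> v) + \<xi> * (u \<bullet> v' + u' \<bullet> v)"
    by (simp add: a inner_add_right inner_commute algebra_simps)
  ultimately have "v \<bullet> a1 + u \<bullet> a2 = 0"
    using uv' by simp
  moreover have "u \<bullet> a1 = \<xi> * (u \<bullet> u')" "v \<bullet> a2 = \<xi> * (v \<bullet> v')"
    by (simp_all add: a inner_add_right dot_cross_self)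
  ultimately show "v \<bullet> a1 + u \<bullet> a2 = 0 \<and> (v \<bullet> v') * (u \<bullet> a1) - (u \<bullet> u') * (v \<bullet> a2) = 0"
    by simp
qed

lemma inner_eq_if_crease_angle_eq:
  fixes x y x' y' :: "real^3"
  assumes "x \<noteq> 0" "y \<noteq> 0" "norm x = norm x'" "norm y = norm y'"
    and "crease_angle x y = crease_angle x' y'"
  shows "x \<bullet> y = x' \<bullet> y'"
proof -
  have bound: "\<bar>(a \<bullet> b) / (norm a * norm b)\<bar> \<le> 1" for a b :: "real^3"
    using Cauchy_Schwarz_ineq2[of a b]
    by (cases "a = 0 \<or> b = 0") (auto simp: abs_divide divide_le_eq_1)
  have "(x \<bullet> y) / (norm x * norm y) = (x' \<bullet> y') / (norm x' * norm y')"
    using assms(5) arccos_eq_iff[OF conjI[OF bound bound]] unfolding crease_angle_def by blast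
  then have "(x \<bullet> y) / (norm x * norm y) = (x' \<bullet> y') / (norm x * norm y)"
    using assms(3,4) by simp
  then show ?thesis
    using assms(1,2) by (simp add: divide_cancel_right)
qed

lemma rigid_crease_mechanism_diagonals_inner_const:
  assumes "rigid_crease_mechanism a b t1 t2 t3 t4" and "s \<in> {a<..<b}" "s' \<in> {a<..<b}"
  shows "(t1 s - t3 s) \<bullet> (t2 s - t4 s) = (t1 s' - t3 s') \<bullet> (t2 s' - t4 s')"
proof -
  have "\<forall>t\<in>{t1, t2, t3, t4}. t s \<noteq> 0 \<and> norm (t s) = norm (t s')"
    and "\<forall>(p, q)\<in>{(t1, t2), (t2, t3), (t3, t4), (t4, t1)}.
      crease_angle (p s) (q s) = crease_angle (p s') (q s')"
    using assms unfolding rigid_crease_mechanism_def by blast+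
  then have "t1 s \<bullet> t2 s = t1 s' \<bullet> t2 s'" "t2 s \<bullet> t3 s = t2 s' \<bullet> t3 s'"
    "t3 s \<bullet> t4 s = t3 s' \<bullet> t4 s'" "t4 s \<bullet> t1 s = t4 s' \<bullet> t1 s'"
    unfolding ball_simps prod.case by (blast intro: inner_eq_if_crease_angle_eq)+
  then show ?thesis
    by (simp add: inner_diff_left inner_diff_right inner_commute)
qed

lemma rigid_crease_mechanism_diagonals_derivative:
  assumes mech: "rigid_crease_mechanism a b t1 t2 t3 t4" and th: "th \<in> {a<..<b}"
    and u: "u = (\<lambda>s. t1 s - t3 s)" and v: "v = (\<lambda>s. t2 s - t4 s)"
  shows "u th \<bullet> vector_derivative v (at th) + vector_derivative u (at th) \<bullet> v th = 0"
proof (rule inner_vector_derivative_eq_0_if_const_on[OF open_greaterThanLessThan th])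
  have "t differentiable (at th)" if "t \<in> {t1, t2, t3, t4}" for t
    using mech th that unfolding rigid_crease_mechanism_def by blast
  then show "u differentiable (at th)" "v differentiable (at th)"
    unfolding u v by (simp_all add: differentiable_diff)
  show "\<forall>s\<in>{a<..<b}. u s \<bullet> v s = u th \<bullet> v th"
    using rigid_crease_mechanism_diagonals_inner_const[OF mech _ th] by (simp add: u v)
qed

theorem lemmaB2:
  fixes theta_m theta_p :: real
    and t1 t2 t3 t4 u v :: "real \<Rightarrow> real^3"
    and R :: "real^3^3" and th :: real and A :: "real^2^3"
  assumes mech: "rigid_crease_mechanism theta_m theta_p t1 t2 t3 t4"
    and u_def: "u = (\<lambda>s. t1 s - t3 s)"
    and v_def: "v = (\<lambda>s. t2 s - t4 s)"
    and orth: "\<forall>s\<in>{theta_m<..<theta_p}. u s \<bullet> axis 3 1 = 0 \<and> v s \<bullet> axis 3 1 = 0"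
    and orient: "\<forall>s\<in>{theta_m<..<theta_p}. axis 3 1 \<bullet> cross3 (u s) (v s) > 0"
    and nondeg_u: "\<forall>s\<in>{theta_m<..<theta_p}. vector_derivative u (at s) \<bullet> u s \<noteq> 0"
    and nondeg_v: "\<forall>s\<in>{theta_m<..<theta_p}. vector_derivative v (at s) \<bullet> v s \<noteq> 0"
    and R_SO3: "rotation_matrix R"
    and th_in: "th \<in> {theta_m<..<theta_p}"
  shows
    "(let u' = vector_derivative u (at th); v' = vector_derivative v (at th);
          L1 = R ** (outer (v th) (axis 1 1) + outer (u th) (axis 2 1));
          L2 = R ** ((v th \<bullet> v') *\<^sub>R outer (u th) (axis 1 1)
                     - (u th \<bullet> u') *\<^sub>R outer (v th) (axis 2 1))
      in (frob L1 A = 0 \<and> frob L2 A = 0 \<longleftrightarrow>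
          (\<exists>\<omega> :: real^3. \<exists>\<xi> :: real.
              A *v axis 1 1 = R *v (cross3 \<omega> (u th) + \<xi> *\<^sub>R u') \<and>
              A *v axis 2 1 = R *v (cross3 \<omega> (v th) + \<xi> *\<^sub>R v'))))"
proof -
  define u' where "u' = vector_derivative u (at th)"
  define v' where "v' = vector_derivative v (at th)"
  define a1 where "a1 = transpose R *v (A *v axis 1 1)"
  define a2 where "a2 = transpose R *v (A *v axis 2 1)"
  have planar: "u th $ 3 = 0" "v th $ 3 = 0"
    using orth th_in by (auto simp: inner_axis)
  have independent: "u th $ 1 * v th $ 2 - u th $ 2 * v th $ 1 \<noteq> 0"
    using orient th_in by (force simp: inner_axis' cross3_def)
  have "u th \<bullet> u' \<noteq> 0" "v th \<bullet> v' \<noteq> 0"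
    using nondeg_u nondeg_v th_in by (simp_all add: u'_def v'_def inner_commute)
  moreover have "u th \<bullet> v' + u' \<bullet> v th = 0"
    unfolding u'_def v'_def by (rule rigid_crease_mechanism_diagonals_derivative[OF mech th_in u_def v_def])
  moreover have "(transpose R ** A) *v axis j 1 = transpose R *v (A *v axis j 1)" for j
    by (simp add: matrix_vector_mul_assoc)
  moreover have "orthogonal_matrix R"
    using R_SO3 by (simp add: rotation_matrix_def)
  ultimately show ?thesis
    using cross3_decomposition_iff[OF planar independent, of u' v' a1 a2]
    by (simp add: Let_def frob_matrix_mult_left frob_add_left frob_diff_left frob_scaleR_left
        frob_outer orthogonal_matrix_eq_mult_iff a1_def a2_def flip: u'_def v'_def)
qed

end
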